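(* Let $\gamma>1$ and $\alpha^2>0$ be constants and $P=\mathrm{diag}(\alpha^2,\tfrac{\gamma-1}{2},\tfrac{\gamma-1}{2},1)$. On a rectangular grid with nodes $(x_i,y_j)$, $i=1,\dots,N$, $j=1,\dots,M$, let $D_x=P_x^{-1}Q_x$ ($N\times N$) and $D_y=P_y^{-1}Q_y$ ($M\times M$) be one-dimensional summation-by-parts (SBP) operators, i.e. $P_x,P_y$ are diagonal positive definite and $Q_x+Q_x^T=B_x:=\mathrm{diag}(-1,0,\dots,0,1)$, $Q_y+Q_y^T=B_y:=\mathrm{diag}(-1,0,\dots,0,1)$. Set $\mathbf{D_x}=I_4\otimes D_x\otimes I_M$, $\mathbf{D_y}=I_4\otimes I_N\otimes D_y$, $\tilde{\mathbf P}=I_4\otimes P_x\otimes P_y$, $\mathbf P=P\otimes I_N\otimes I_M$, $\mathbf{B_x}=I_4\otimes B_x\otimes P_y$, $\mathbf{B_y}=I_4\otimes P_x\otimes B_y$. Let $\vec\Phi(t)=(\vec\Phi_1^T,\dots,\vec\Phi_4^T)^T\in\mathbb{R}^{4NM}$, where $\vec\Phi_k$ collects nodal values approximating $\phi_k$ and the entries of $\vec\Phi_1$ are nonzero. For a $4\times4$ matrix function $A$ of the nodal values of $\Phi=(\phi_1,\dots,\phi_4)$ with entries $a_{kl}$, let $\mathbf A$ denote the $4NM\times4NM$ block matrix whose $(k,l)$ block is $\mathrm{diag}\big(a_{kl}(x_1,y_1),\dots,a_{kl}(x_N,y_M)\big)$ (nodal values, in the same ordering as $\vec\Phi_k$). Apply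 this with $u=\phi_2/\phi_1$, $v=\phi_3/\phi_1$ to $$A_1=\frac12\begin{bmatrix}u&0&0&0\\0&u&0&0\\0&0&u&0\\0&2(\gamma-1)\frac{\phi_4}{\phi_1}&0&(2-\gamma)u\end{bmatrix},\quad A_2=\frac12\begin{bmatrix}u&0&0&0\\0&u&0&4\frac{\phi_4}{\phi_1}\\0&0&u&0\\0&0&0&(2-\gamma)u\end{bmatrix},$$ $$B_1=\frac12\begin{bmatrix}v&0&0&0\\0&v&0&0\\0&0&v&0\\0&0&2(\gamma-1)\frac{\phi_4}{\phi_1}&(2-\gamma)v\end{bmatrix},\quad B_2=\frac12\begin{bmatrix}v&0&0&0\\0&v&0&0\\0&0&v&4\frac{\phi_4}{\phi_1}\\0&0&0&(2-\gamma)v\end{bmatrix},$$ obtaining $\mathbf{A_1},\mathbf{A_2},\mathbf{B_1},\mathbf{B_2}$. If $\vec\Phi$ is a differentiable solution of the semi-discrete scheme $$\vec\Phi_t+\mathbf{D_x}(\mathbf{A_1}\vec\Phi)+\mathbf{A_2}\mathbf{D_x}\vec\Phi+\mathbf{D_y}(\mathbf{B_1}\vec\Phi)+\mathbf{B_2}\mathbf{D_y}\vec\Phi=0,$$ then, with $\tilde{\mathbf A}=2\mathbf P\mathbf{A_1}$ and $\tilde{\mathbf B}=2\mathbf P\mathbf{B_1}$, $$\frac{d}{dt}\,\vec\Phi^T(\mathbf P\tilde{\mathbf P})\vec\Phi+\vec\Phi^T\big(\mathbf{B_x}\tilde{\mathbf A}+\mathbf{B_y}\tilde{\mathbf B}\big)\vec\Phi=0,$$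 i.e. the discrete energy $\vec\Phi^T(\mathbf P\tilde{\mathbf P})\vec\Phi$ changes only through boundary terms.
   Context: The variables $\phi_1,\phi_2,\phi_3,\phi_4$ correspond to $\sqrt{\rho},\sqrt{\rho}u,\sqrt{\rho}v,\sqrt{p}$ for the compressible Euler equations with density $\rho$, velocities $u,v$, pressure $p$, and ratio of specific heats $\gamma$. $\otimes$ denotes the Kronecker product and $I_k$ the $k\times k$ identity. *)

theory Defs
  imports Complex_Main
begin

text \<open>A square matrix of size n is a function nat => nat => real,
only its entries with indices below n matter.  The state vector in R^(4NM) is
indexed by triples (k,i,j) with k<4, i<N, j<M, in lexicographic order
(component k, then x-node i, then y-node j), so that the Kronecker product
C1 (x) C2 (x) C3 has entry C1 k k' * C2 i i' * C3 j j' at ((k,i,j),(k',i',j')).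
All indices are 0-based.\<close>

type_synonym sqmat = "nat \<Rightarrow> nat \<Rightarrow> real"
type_synonym bidx = "nat \<times> nat \<times> nat"
type_synonym bmat = "bidx \<Rightarrow> bidx \<Rightarrow> real"
type_synonym bvec = "bidx \<Rightarrow> real"

definition idx3 :: "nat \<Rightarrow> nat \<Rightarrow> bidx set" where
  "idx3 N M = {..<4} \<times> {..<N} \<times> {..<M}"

definition idm :: sqmat where
  "idm = (\<lambda>a b. if a = b then 1 else 0)"

definition diagm :: "(nat \<Rightarrow> real) \<Rightarrow> sqmat" where
  "diagm d = (\<lambda>a b. if a = b then d a else 0)"

definition kron3 :: "sqmat \<Rightarrow> sqmat \<Rightarrow> sqmat \<Rightarrow> bmat" where
  "kron3 C1 C2 C3 = (\<lambda>(k,i,j) (k',i',j'). C1 k k' * C2 i i' * C3 j j')"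

definition mmul :: "bidx set \<Rightarrow> bmat \<Rightarrow> bmat \<Rightarrow> bmat" where
  "mmul S A B = (\<lambda>r c. \<Sum>s\<in>S. A r s * B s c)"

definition mvec :: "bidx set \<Rightarrow> bmat \<Rightarrow> bvec \<Rightarrow> bvec" where
  "mvec S A v = (\<lambda>r. \<Sum>s\<in>S. A r s * v s)"

definition smul :: "real \<Rightarrow> bmat \<Rightarrow> bmat" where
  "smul c A = (\<lambda>r s. c * A r s)"

definition madd :: "bmat \<Rightarrow> bmat \<Rightarrow> bmat" where
  "madd A B = (\<lambda>r s. A r s + B r s)"

definition qform :: "bidx set \<Rightarrow> bvec \<Rightarrow> bmat \<Rightarrow> real" where
  "qform S v A = (\<Sum>r\<in>S. \<Sum>c\<in>S. v r * A r c * v c)"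

definition bnd :: "nat \<Rightarrow> sqmat" where
  "bnd n = (\<lambda>a b. if a = b \<and> a = 0 then -1 else if a = b \<and> a = n - 1 then 1 else 0)"

definition is_SBP :: "nat \<Rightarrow> sqmat \<Rightarrow> sqmat \<Rightarrow> sqmat \<Rightarrow> bool" where
  "is_SBP n D Pd Q \<longleftrightarrow>
     (\<forall>a<n. Pd a a > 0) \<and>
     (\<forall>a<n. \<forall>b<n. a \<noteq> b \<longrightarrow> Pd a b = 0) \<and>
     (\<forall>a<n. \<forall>b<n. Q a b + Q b a = bnd n a b) \<and>
     (\<forall>a<n. \<forall>b<n. D a b = Q a b / Pd a a)"

text \<open>Block matrix with (k,l) block diag(a_kl at the nodes), where the 4x4 matrix a
depends on the nodal values (phi_1..phi_4) = (Phi(0,i,j),...,Phi(3,i,j)).\<close>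
definition nodal :: "((nat \<Rightarrow> real) \<Rightarrow> sqmat) \<Rightarrow> bvec \<Rightarrow> bmat" where
  "nodal a Phi = (\<lambda>(k,i,j) (k',i',j').
      if i = i' \<and> j = j' then a (\<lambda>m. Phi (m,i,j)) k k' else 0)"

definition A1m :: "real \<Rightarrow> (nat \<Rightarrow> real) \<Rightarrow> sqmat" where
  "A1m \<gamma> \<phi> = (let u = \<phi> 1 / \<phi> 0 in
     (\<lambda>k l. (1/2) * ([[u,0,0,0],[0,u,0,0],[0,0,u,0],
                       [0, 2*(\<gamma>-1)*(\<phi> 3 / \<phi> 0), 0, (2-\<gamma>)*u]] ! k ! l)))"

definition A2m :: "real \<Rightarrow> (nat \<Rightarrow> real) \<Rightarrow> sqmat" where
  "A2m \<gamma> \<phi> = (let u = \<phi> 1 / \<phi> 0 in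
     (\<lambda>k l. (1/2) * ([[u,0,0,0],[0,u,0,4*(\<phi> 3 / \<phi> 0)],[0,0,u,0],
                       [0,0,0,(2-\<gamma>)*u]] ! k ! l)))"

definition B1m :: "real \<Rightarrow> (nat \<Rightarrow> real) \<Rightarrow> sqmat" where
  "B1m \<gamma> \<phi> = (let v = \<phi> 2 / \<phi> 0 in
     (\<lambda>k l. (1/2) * ([[v,0,0,0],[0,v,0,0],[0,0,v,0],
                       [0,0,2*(\<gamma>-1)*(\<phi> 3 / \<phi> 0),(2-\<gamma>)*v]] ! k ! l)))"

definition B2m :: "real \<Rightarrow> (nat \<Rightarrow> real) \<Rightarrow> sqmat" where
  "B2m \<gamma> \<phi> = (let v = \<phi> 2 / \<phi> 0 in
     (\<lambda>k l. (1/2) * ([[v,0,0,0],[0,v,0,0],[0,0,v,4*(\<phi> 3 / \<phi> 0)],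
                       [0,0,0,(2-\<gamma>)*v]] ! k ! l)))"

definition Pdiag :: "real \<Rightarrow> real \<Rightarrow> nat \<Rightarrow> real" where
  "Pdiag alpha2 \<gamma> k = [alpha2, (\<gamma>-1)/2, (\<gamma>-1)/2, 1] ! k"

end

theory Submission
  imports Defs
begin

(* The energy is a weighted sum of squares, so its rate is 2 Phi^T (P (x) Px (x) Py) Phi_t.
   Along each grid line the split form D(A1 Phi) + A2 D Phi is built so that, node by node,
   Phi^T P A2 (D Phi) = (A1 Phi)^T P (D Phi).  After this exchange the interior terms of every
   component k read f^T Px D g + g^T Px D f with f = Phi_k, g = (A1 Phi)_k, and the SBP property
   Q + Q^T = B collapses them to the boundary term f^T B g.  The node identity is polynomial in
   u, v and phi_4/phi_1. *)

lemma is_SBP_norm_mult_D: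
  assumes "is_SBP n D Pd Q" "a < n" "b < n"
  shows "Pd a a * D a b = Q a b"
  using assms unfolding is_SBP_def by (metis less_irrefl nonzero_mult_div_cancel_left times_divide_eq_right)

lemma bnd_offdiag: "a \<noteq> b \<Longrightarrow> bnd n a b = 0"
  by (simp add: bnd_def)

lemma SBP_summation_by_parts:
  assumes sbp: "is_SBP n D Pd Q"
  shows "(\<Sum>b<n. Pd b b * f b * (\<Sum>b'<n. D b b' * g b'))
       + (\<Sum>b<n. Pd b b * g b * (\<Sum>b'<n. D b b' * f b'))
       = (\<Sum>b<n. bnd n b b * f b * g b)"
proof -
  have Q: "Pd b b * (\<Sum>b'<n. D b b' * h b') = (\<Sum>b'<n. Q b b' * h b')" if "b < n" for b h
    using is_SBP_norm_mult_D[OF sbp that] by (simp add: sum_distrib_left mult.assoc[symmetric])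
  have Pf: "(\<Sum>b<n. Pd b b * f b * (\<Sum>b'<n. D b b' * g b')) = (\<Sum>b<n. \<Sum>b'<n. f b * Q b b' * g b')"
    and Pg: "(\<Sum>b<n. Pd b b * g b * (\<Sum>b'<n. D b b' * f b')) = (\<Sum>b<n. \<Sum>b'<n. g b * Q b b' * f b')"
    by (intro sum.cong refl; simp add: Q[symmetric] sum_distrib_left[symmetric] mult.assoc)+
  have "(\<Sum>b<n. Pd b b * f b * (\<Sum>b'<n. D b b' * g b'))
       + (\<Sum>b<n. Pd b b * g b * (\<Sum>b'<n. D b b' * f b'))
       = (\<Sum>b<n. \<Sum>b'<n. f b * (Q b b' + Q b' b) * g b')"
    unfolding Pf Pg by (subst (2) sum.swap) (simp add: sum.distrib[symmetric] algebra_simps)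
  also have "\<dots> = (\<Sum>b<n. \<Sum>b'<n. if b' = b then bnd n b b * f b * g b else 0)"
    using sbp by (intro sum.cong refl) (auto simp: is_SBP_def bnd_offdiag)
  finally show ?thesis by simp
qed

lemma SBP_split_form_energy:
  fixes \<phi> F G :: "'e \<Rightarrow> nat \<Rightarrow> real"
  assumes sbp: "is_SBP n D Pd Q"
    and coupling: "\<And>b. b < n \<Longrightarrow>
      (\<Sum>e\<in>E. p e * \<phi> e b * G e b) = (\<Sum>e\<in>E. p e * F e b * (\<Sum>b'<n. D b b' * \<phi> e b'))"
  shows "(\<Sum>e\<in>E. \<Sum>b<n. p e * Pd b b * \<phi> e b * ((\<Sum>b'<n. D b b' * F e b') + G e b))
       = (\<Sum>e\<in>E. \<Sum>b<n. p e * bnd n b b * \<phi> e b * F e b)"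
proof -
  have "(\<Sum>e\<in>E. \<Sum>b<n. p e * Pd b b * \<phi> e b * G e b)
      = (\<Sum>b<n. Pd b b * (\<Sum>e\<in>E. p e * \<phi> e b * G e b))"
    by (subst sum.swap) (simp add: sum_distrib_left ac_simps)
  also have "\<dots> = (\<Sum>b<n. Pd b b * (\<Sum>e\<in>E. p e * F e b * (\<Sum>b'<n. D b b' * \<phi> e b')))"
    by (simp add: coupling)
  also have "\<dots> = (\<Sum>e\<in>E. \<Sum>b<n. p e * (Pd b b * F e b * (\<Sum>b'<n. D b b' * \<phi> e b')))"
    by (subst sum.swap) (simp add: sum_distrib_left ac_simps)
  finally have "(\<Sum>e\<in>E. \<Sum>b<n. p e * Pd b b * \<phi> e b * ((\<Sum>b'<n. D b b' * F e b') + G e b))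
      = (\<Sum>e\<in>E. p e * ((\<Sum>b<n. Pd b b * \<phi> e b * (\<Sum>b'<n. D b b' * F e b'))
                          + (\<Sum>b<n. Pd b b * F e b * (\<Sum>b'<n. D b b' * \<phi> e b'))))"
    by (simp add: distrib_left sum.distrib sum_distrib_left ac_simps)
  also have "\<dots> = (\<Sum>e\<in>E. \<Sum>b<n. p e * bnd n b b * \<phi> e b * F e b)"
    by (simp only: SBP_summation_by_parts[OF sbp]) (simp add: sum_distrib_left ac_simps)
  finally show ?thesis .
qed

(* A split form D(C1 Phi) + C2 D Phi whose pair (C1, C2) satisfies this node-wise identity
   psi^T P C2(psi) y = (C1(psi) psi)^T P y has no interior energy production. *)
definition split_compatible ::
    "(nat \<Rightarrow> real) \<Rightarrow> ((nat \<Rightarrow> real) \<Rightarrow> sqmat) \<Rightarrow> ((nat \<Rightarrow> real) \<Rightarrow> sqmat) \<Rightarrow> bool" where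
  "split_compatible p C1 C2 \<longleftrightarrow> (\<forall>\<psi> y.
     (\<Sum>k<4. p k * \<psi> k * (\<Sum>l<4. C2 \<psi> k l * y l)) = (\<Sum>k<4. p k * (\<Sum>l<4. C1 \<psi> k l * \<psi> l) * y k))"

lemma sum_lessThan_4: "(\<Sum>k<(4::nat). f k) = f 0 + f 1 + f 2 + (f 3 :: real)"
  by (simp add: numeral_eq_Suc)

lemma split_compatible_A: "split_compatible (Pdiag alpha2 \<gamma>) (A1m \<gamma>) (A2m \<gamma>)"
  unfolding split_compatible_def sum_lessThan_4
  by (simp add: Pdiag_def A1m_def A2m_def Let_def field_simps)

lemma split_compatible_B: "split_compatible (Pdiag alpha2 \<gamma>) (B1m \<gamma>) (B2m \<gamma>)"
  unfolding split_compatible_def sum_lessThan_4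
  by (simp add: Pdiag_def B1m_def B2m_def Let_def field_simps)

definition diagonal_on :: "nat \<Rightarrow> sqmat \<Rightarrow> bool" where
  "diagonal_on n C \<longleftrightarrow> (\<forall>a<n. \<forall>b<n. a \<noteq> b \<longrightarrow> C a b = 0)"

lemma diagonal_on_idm [simp]: "diagonal_on n idm"
  and diagonal_on_diagm [simp]: "diagonal_on n (diagm d)"
  and diagonal_on_bnd [simp]: "diagonal_on n (bnd n)"
  by (simp_all add: diagonal_on_def idm_def diagm_def bnd_def)

lemma idm_diag [simp]: "idm a a = 1"
  by (simp add: idm_def)

lemma diagm_diag [simp]: "diagm d a a = d a"
  by (simp add: diagm_def)

lemma is_SBP_diagonal_on: "is_SBP n D Pd Q \<Longrightarrow> diagonal_on n Pd"
  by (simp add: is_SBP_def diagonal_on_def)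

lemma idx3_mem [simp]: "(k, i, j) \<in> idx3 N M \<longleftrightarrow> k < 4 \<and> i < N \<and> j < M"
  by (simp add: idx3_def)

lemma sum_idx3: "sum g (idx3 N M) = (\<Sum>k<4. \<Sum>i<N. \<Sum>j<M. g (k, i, j))"
  by (simp add: idx3_def sum.cartesian_product)

lemma sum_idx3_x_lines: "sum g (idx3 N M) = (\<Sum>(k, j)\<in>{..<4} \<times> {..<M}. \<Sum>i<N. g (k, i, j))"
  by (simp add: sum_idx3 sum.cartesian_product[symmetric] sum.swap[where A = "{..<N}"])

lemma sum_idx3_y_lines: "sum g (idx3 N M) = (\<Sum>(k, i)\<in>{..<4} \<times> {..<N}. \<Sum>j<M. g (k, i, j))"
  by (simp add: sum_idx3 sum.cartesian_product[symmetric])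

lemma sum_diagonal_on:
  assumes "diagonal_on n C" "a < n"
  shows "(\<Sum>b<n. C a b * f b) = C a a * f a"
proof -
  have "(\<Sum>b<n. C a b * f b) = (\<Sum>b<n. if b = a then C a a * f a else 0)"
    using assms by (intro sum.cong) (auto simp: diagonal_on_def)
  then show ?thesis using assms(2) by simp
qed

lemma mvec_kron3:
  "mvec (idx3 N M) (kron3 C1 C2 C3) v (k, i, j)
   = (\<Sum>k'<4. C1 k k' * (\<Sum>i'<N. C2 i i' * (\<Sum>j'<M. C3 j j' * v (k', i', j'))))"
  by (simp add: mvec_def sum_idx3 kron3_def sum_distrib_left mult.assoc)

lemma mvec_kron3_x:
  "k < 4 \<Longrightarrow> j < M \<Longrightarrow>
   mvec (idx3 N M) (kron3 idm D idm) v (k, i, j) = (\<Sum>i'<N. D i i' * v (k, i', j))"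
  by (simp add: mvec_kron3 sum_diagonal_on[OF diagonal_on_idm])

lemma mvec_kron3_y:
  "k < 4 \<Longrightarrow> i < N \<Longrightarrow>
   mvec (idx3 N M) (kron3 idm idm D) v (k, i, j) = (\<Sum>j'<M. D j j' * v (k, i, j'))"
  by (simp add: mvec_kron3 sum_diagonal_on[OF diagonal_on_idm])

lemma mvec_kron3_diagonal:
  assumes "diagonal_on 4 C1" "diagonal_on N C2" "diagonal_on M C3" "(k, i, j) \<in> idx3 N M"
  shows "mvec (idx3 N M) (kron3 C1 C2 C3) v (k, i, j) = C1 k k * C2 i i * C3 j j * v (k, i, j)"
  using assms by (simp add: mvec_kron3 sum_diagonal_on[OF assms(1)] sum_diagonal_on[OF assms(2)]
      sum_diagonal_on[OF assms(3)] mult.assoc)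

lemma mvec_nodal:
  assumes "i < N" "j < M"
  shows "mvec (idx3 N M) (nodal C \<phi>) v (k, i, j) = (\<Sum>l<4. C (\<lambda>m. \<phi> (m, i, j)) k l * v (l, i, j))"
proof -
  have entry: "nodal C \<phi> (k, i, j) (l, i', j') * v (l, i', j')
      = C (\<lambda>m. \<phi> (m, i, j)) k l * (idm i i' * (idm j j' * v (l, i', j')))" for l i' j'
    by (simp add: nodal_def idm_def)
  show ?thesis
    unfolding mvec_def sum_idx3 entry
    using assms by (simp add: sum_distrib_left[symmetric] sum_diagonal_on[OF diagonal_on_idm])
qed

lemma mvec_mmul: "mvec S (mmul S A B) v = mvec S A (mvec S B v)"
  unfolding mvec_def mmul_def by (rule ext) (simp add: sum_distrib_left sum_distrib_right mult.assoc, rule sum.swap)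

lemma mvec_smul: "mvec S (smul c A) v = (\<lambda>r. c * mvec S A v r)"
  by (simp add: mvec_def smul_def sum_distrib_left mult.assoc)

lemma qform_eq_sum_mvec: "qform S v A = (\<Sum>r\<in>S. v r * mvec S A v r)"
  by (simp add: qform_def mvec_def sum_distrib_left mult.assoc)

lemma qform_madd: "qform S v (madd A B) = qform S v A + qform S v B"
  by (simp add: qform_def madd_def distrib_left distrib_right sum.distrib)

lemma qform_mmul_kron3_diagonal:
  assumes "diagonal_on 4 C1" "diagonal_on N C2" "diagonal_on M C3"
  shows "qform (idx3 N M) v (mmul (idx3 N M) (kron3 C1 C2 C3) Z)
       = (\<Sum>(k, i, j)\<in>idx3 N M. C1 k k * C2 i i * C3 j j * v (k, i, j) * mvec (idx3 N M) Z v (k, i, j))"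
  unfolding qform_eq_sum_mvec mvec_mmul
  by (intro sum.cong refl) (auto simp: mvec_kron3_diagonal[OF assms])

lemma qform_weighted_boundary:
  assumes "diagonal_on N Bx" "diagonal_on M By"
  shows "qform (idx3 N M) v (mmul (idx3 N M) (kron3 idm Bx By) (smul 2 (mmul (idx3 N M) (kron3 (diagm p) idm idm) Z)))
       = 2 * (\<Sum>(k, i, j)\<in>idx3 N M. p k * Bx i i * By j j * v (k, i, j) * mvec (idx3 N M) Z v (k, i, j))"
  unfolding qform_mmul_kron3_diagonal[OF diagonal_on_idm assms] sum_distrib_left
  by (intro sum.cong refl) (auto simp: mvec_smul mvec_mmul mvec_kron3_diagonal)

lemma split_compatible_nodal:
  assumes "split_compatible p C1 C2" "i < N" "j < M"
  shows "(\<Sum>k<4. p k * \<phi> (k, i, j) * mvec (idx3 N M) (nodal C2 \<phi>) y (k, i, j))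
       = (\<Sum>k<4. p k * mvec (idx3 N M) (nodal C1 \<phi>) \<phi> (k, i, j) * y (k, i, j))"
  using assms by (simp add: split_compatible_def mvec_nodal)

lemma energy_flux_x:
  fixes \<phi> :: bvec and N M :: nat
  assumes sbp: "is_SBP N Dx Px Qx" and compat: "split_compatible p C1 C2"
  defines "S \<equiv> idx3 N M"
  shows "(\<Sum>(k, i, j)\<in>S. p k * Px i i * Py j j * \<phi> (k, i, j) *
            (mvec S (kron3 idm Dx idm) (mvec S (nodal C1 \<phi>) \<phi>) (k, i, j)
             + mvec S (nodal C2 \<phi>) (mvec S (kron3 idm Dx idm) \<phi>) (k, i, j)))
       = (\<Sum>(k, i, j)\<in>S. p k * bnd N i i * Py j j * \<phi> (k, i, j) * mvec S (nodal C1 \<phi>) \<phi> (k, i, j))"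
proof -
  define F where "F = mvec S (nodal C1 \<phi>) \<phi>"
  define D\<phi> where "D\<phi> = mvec S (kron3 idm Dx idm) \<phi>"
  define G where "G = mvec S (nodal C2 \<phi>) D\<phi>"
  define E where "E = {..<4::nat} \<times> {..<M}"
  have coupling: "(\<Sum>(k, j)\<in>E. p k * Py j j * \<phi> (k, i, j) * G (k, i, j))
      = (\<Sum>(k, j)\<in>E. p k * Py j j * F (k, i, j) * (\<Sum>i'<N. Dx i i' * \<phi> (k, i', j)))"
    if "i < N" for i
  proof -
    have "(\<Sum>(k, j)\<in>E. p k * Py j j * \<phi> (k, i, j) * G (k, i, j))
        = (\<Sum>j<M. Py j j * (\<Sum>k<4. p k * \<phi> (k, i, j) * G (k, i, j)))"
      by (simp add: E_def sum.cartesian_product[symmetric] sum.swap[of _ "{..<4}"] sum_distrib_left ac_simps)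
    also have "\<dots> = (\<Sum>j<M. Py j j * (\<Sum>k<4. p k * F (k, i, j) * D\<phi> (k, i, j)))"
      unfolding G_def F_def S_def using split_compatible_nodal[OF compat that] by simp
    also have "\<dots> = (\<Sum>(k, j)\<in>E. p k * Py j j * F (k, i, j) * (\<Sum>i'<N. Dx i i' * \<phi> (k, i', j)))"
      by (simp add: E_def D\<phi>_def S_def mvec_kron3_x sum.cartesian_product[symmetric] sum.swap[of _ "{..<4}"]
          sum_distrib_left ac_simps)
    finally show ?thesis .
  qed
  have "(\<Sum>(k, i, j)\<in>S. p k * Px i i * Py j j * \<phi> (k, i, j) * (mvec S (kron3 idm Dx idm) F (k, i, j) + G (k, i, j)))
      = (\<Sum>(k, j)\<in>E. \<Sum>i<N. p k * Py j j * Px i i * \<phi> (k, i, j) *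
            ((\<Sum>i'<N. Dx i i' * F (k, i', j)) + G (k, i, j)))"
    unfolding S_def sum_idx3_x_lines E_def by (intro sum.cong refl) (auto simp: mvec_kron3_x ac_simps)
  also have "\<dots> = (\<Sum>(k, j)\<in>E. \<Sum>i<N. p k * Py j j * bnd N i i * \<phi> (k, i, j) * F (k, i, j))"
    using SBP_split_form_energy[OF sbp, where E = E and p = "\<lambda>(k, j). p k * Py j j"
        and \<phi> = "\<lambda>(k, j) i. \<phi> (k, i, j)" and G = "\<lambda>(k, j) i. G (k, i, j)" and F = "\<lambda>(k, j) i. F (k, i, j)"] coupling
    by (simp add: split_def)
  also have "\<dots> = (\<Sum>(k, i, j)\<in>S. p k * bnd N i i * Py j j * \<phi> (k, i, j) * F (k, i, j))"
    unfolding S_def sum_idx3_x_lines E_def by (simp add: ac_simps)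
  finally show ?thesis by (simp add: F_def G_def D\<phi>_def)
qed

lemma energy_flux_y:
  fixes \<phi> :: bvec and N M :: nat
  assumes sbp: "is_SBP M Dy Py Qy" and compat: "split_compatible p C1 C2"
  defines "S \<equiv> idx3 N M"
  shows "(\<Sum>(k, i, j)\<in>S. p k * Px i i * Py j j * \<phi> (k, i, j) *
            (mvec S (kron3 idm idm Dy) (mvec S (nodal C1 \<phi>) \<phi>) (k, i, j)
             + mvec S (nodal C2 \<phi>) (mvec S (kron3 idm idm Dy) \<phi>) (k, i, j)))
       = (\<Sum>(k, i, j)\<in>S. p k * Px i i * bnd M j j * \<phi> (k, i, j) * mvec S (nodal C1 \<phi>) \<phi> (k, i, j))"
proof -
  define F where "F = mvec S (nodal C1 \<phi>) \<phi>"
  define D\<phi> where "D\<phi> = mvec S (kron3 idm idm Dy) \<phi>"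
  define G where "G = mvec S (nodal C2 \<phi>) D\<phi>"
  define E where "E = {..<4::nat} \<times> {..<N}"
  have coupling: "(\<Sum>(k, i)\<in>E. p k * Px i i * \<phi> (k, i, j) * G (k, i, j))
      = (\<Sum>(k, i)\<in>E. p k * Px i i * F (k, i, j) * (\<Sum>j'<M. Dy j j' * \<phi> (k, i, j')))"
    if "j < M" for j
  proof -
    have "(\<Sum>(k, i)\<in>E. p k * Px i i * \<phi> (k, i, j) * G (k, i, j))
        = (\<Sum>i<N. Px i i * (\<Sum>k<4. p k * \<phi> (k, i, j) * G (k, i, j)))"
      by (simp add: E_def sum.cartesian_product[symmetric] sum.swap[of _ "{..<4}"] sum_distrib_left ac_simps)
    also have "\<dots> = (\<Sum>i<N. Px i i * (\<Sum>k<4. p k * F (k, i, j) * D\<phi> (k, i, j)))"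
      unfolding G_def F_def S_def using split_compatible_nodal[OF compat _ that] by simp
    also have "\<dots> = (\<Sum>(k, i)\<in>E. p k * Px i i * F (k, i, j) * (\<Sum>j'<M. Dy j j' * \<phi> (k, i, j')))"
      by (simp add: E_def D\<phi>_def S_def mvec_kron3_y sum.cartesian_product[symmetric] sum.swap[of _ "{..<4}"]
          sum_distrib_left ac_simps)
    finally show ?thesis .
  qed
  have "(\<Sum>(k, i, j)\<in>S. p k * Px i i * Py j j * \<phi> (k, i, j) * (mvec S (kron3 idm idm Dy) F (k, i, j) + G (k, i, j)))
      = (\<Sum>(k, i)\<in>E. \<Sum>j<M. p k * Px i i * Py j j * \<phi> (k, i, j) *
            ((\<Sum>j'<M. Dy j j' * F (k, i, j')) + G (k, i, j)))"
    unfolding S_def sum_idx3_y_lines E_def by (intro sum.cong refl) (auto simp: mvec_kron3_y)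
  also have "\<dots> = (\<Sum>(k, i)\<in>E. \<Sum>j<M. p k * Px i i * bnd M j j * \<phi> (k, i, j) * F (k, i, j))"
    using SBP_split_form_energy[OF sbp, where E = E and p = "\<lambda>(k, i). p k * Px i i"
        and \<phi> = "\<lambda>(k, i) j. \<phi> (k, i, j)" and G = "\<lambda>(k, i) j. G (k, i, j)" and F = "\<lambda>(k, i) j. F (k, i, j)"] coupling
    by (simp add: split_def)
  also have "\<dots> = (\<Sum>(k, i, j)\<in>S. p k * Px i i * bnd M j j * \<phi> (k, i, j) * F (k, i, j))"
    unfolding S_def sum_idx3_y_lines E_def by simp
  finally show ?thesis by (simp add: F_def G_def D\<phi>_def)
qed

lemma split_form_energy_rate:
  fixes N M :: nat and Phi :: "real \<Rightarrow> bvec" and Phi' :: bvec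
  defines "S \<equiv> idx3 N M"
  assumes sbpx: "is_SBP N Dx Px Qx" and sbpy: "is_SBP M Dy Py Qy"
    and compatA: "split_compatible p A1 A2" and compatB: "split_compatible p B1 B2"
    and diff: "\<And>r. r \<in> S \<Longrightarrow> ((\<lambda>s. Phi s r) has_real_derivative Phi' r) (at t)"
    and scheme: "\<And>r. r \<in> S \<Longrightarrow>
        Phi' r
        + mvec S (kron3 idm Dx idm) (mvec S (nodal A1 (Phi t)) (Phi t)) r
        + mvec S (nodal A2 (Phi t)) (mvec S (kron3 idm Dx idm) (Phi t)) r
        + mvec S (kron3 idm idm Dy) (mvec S (nodal B1 (Phi t)) (Phi t)) r
        + mvec S (nodal B2 (Phi t)) (mvec S (kron3 idm idm Dy) (Phi t)) r
        = 0"
  shows "((\<lambda>s. qform S (Phi s) (mmul S (kron3 (diagm p) idm idm) (kron3 idm Px Py)))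
          has_real_derivative
          - qform S (Phi t)
              (madd (mmul S (kron3 idm (bnd N) Py) (smul 2 (mmul S (kron3 (diagm p) idm idm) (nodal A1 (Phi t)))))
                    (mmul S (kron3 idm Px (bnd M)) (smul 2 (mmul S (kron3 (diagm p) idm idm) (nodal B1 (Phi t)))))))
         (at t)"
proof -
  define \<phi> where "\<phi> = Phi t"
  define w where "w = (\<lambda>(k, i, j). p k * Px i i * Py j j)"
  have diagP: "diagonal_on N Px" "diagonal_on M Py"
    using sbpx sbpy by (simp_all add: is_SBP_diagonal_on)
  have energy: "qform S v (mmul S (kron3 (diagm p) idm idm) (kron3 idm Px Py)) = (\<Sum>r\<in>S. w r * v r * v r)" for v
    unfolding S_def qform_mmul_kron3_diagonal[OF diagonal_on_diagm diagonal_on_idm diagonal_on_idm]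
    by (intro sum.cong refl) (auto simp: w_def mvec_kron3_diagonal diagP)
  have deriv: "((\<lambda>s. \<Sum>r\<in>S. w r * Phi s r * Phi s r) has_real_derivative (\<Sum>r\<in>S. 2 * w r * \<phi> r * Phi' r)) (at t)"
    unfolding \<phi>_def by (intro DERIV_sum) (auto intro!: derivative_eq_intros diff)
  define X where "X = (\<Sum>(k, i, j)\<in>S. p k * bnd N i i * Py j j * \<phi> (k, i, j) * mvec S (nodal A1 \<phi>) \<phi> (k, i, j))"
  define Y where "Y = (\<Sum>(k, i, j)\<in>S. p k * Px i i * bnd M j j * \<phi> (k, i, j) * mvec S (nodal B1 \<phi>) \<phi> (k, i, j))"
  have Phi'_eq: "Phi' r = - (mvec S (kron3 idm Dx idm) (mvec S (nodal A1 \<phi>) \<phi>) r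
                             + mvec S (nodal A2 \<phi>) (mvec S (kron3 idm Dx idm) \<phi>) r)
                         - (mvec S (kron3 idm idm Dy) (mvec S (nodal B1 \<phi>) \<phi>) r
                             + mvec S (nodal B2 \<phi>) (mvec S (kron3 idm idm Dy) \<phi>) r)"
    if "r \<in> S" for r
    unfolding \<phi>_def using scheme[OF that] by linarith
  have "(\<Sum>r\<in>S. 2 * w r * \<phi> r * Phi' r)
      = - 2 * (\<Sum>(k, i, j)\<in>S. p k * Px i i * Py j j * \<phi> (k, i, j) *
            (mvec S (kron3 idm Dx idm) (mvec S (nodal A1 \<phi>) \<phi>) (k, i, j)
             + mvec S (nodal A2 \<phi>) (mvec S (kron3 idm Dx idm) \<phi>) (k, i, j)))
        - 2 * (\<Sum>(k, i, j)\<in>S. p k * Px i i * Py j j * \<phi> (k, i, j) *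
            (mvec S (kron3 idm idm Dy) (mvec S (nodal B1 \<phi>) \<phi>) (k, i, j)
             + mvec S (nodal B2 \<phi>) (mvec S (kron3 idm idm Dy) \<phi>) (k, i, j)))"
    unfolding sum_distrib_left sum_subtractf[symmetric]
    by (intro sum.cong refl) (auto simp: w_def Phi'_eq algebra_simps)
  also have "\<dots> = - (2 * X + 2 * Y)"
    unfolding X_def Y_def S_def energy_flux_x[OF sbpx compatA] energy_flux_y[OF sbpy compatB] by simp
  also have "\<dots> = - qform S \<phi>
              (madd (mmul S (kron3 idm (bnd N) Py) (smul 2 (mmul S (kron3 (diagm p) idm idm) (nodal A1 \<phi>))))
                    (mmul S (kron3 idm Px (bnd M)) (smul 2 (mmul S (kron3 (diagm p) idm idm) (nodal B1 \<phi>)))))"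
    by (simp add: qform_madd S_def X_def Y_def qform_weighted_boundary diagP)
  finally show ?thesis
    unfolding energy using deriv by (simp add: \<phi>_def)
qed

theorem mainTheorem3:
  fixes \<gamma> alpha2 a b :: real and N M :: nat
    and Dx Px Qx Dy Py Qy :: sqmat
    and Phi Phi' :: "real \<Rightarrow> bvec"
  assumes gam: "\<gamma> > 1" and alpha: "alpha2 > 0"
    and NM: "N \<ge> 2" "M \<ge> 2"
    and sbpx: "is_SBP N Dx Px Qx" and sbpy: "is_SBP M Dy Py Qy"
    and ab: "a < b"
    and nz: "\<And>t i j. t \<in> {a<..<b} \<Longrightarrow> i < N \<Longrightarrow> j < M \<Longrightarrow> Phi t (0,i,j) \<noteq> 0"
    and diff: "\<And>t r. t \<in> {a<..<b} \<Longrightarrow> r \<in> idx3 N M \<Longrightarrow>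
                 ((\<lambda>s. Phi s r) has_real_derivative Phi' t r) (at t)"
    and scheme: "\<And>t r. t \<in> {a<..<b} \<Longrightarrow> r \<in> idx3 N M \<Longrightarrow>
        Phi' t r
        + mvec (idx3 N M) (kron3 idm Dx idm) (mvec (idx3 N M) (nodal (A1m \<gamma>) (Phi t)) (Phi t)) r
        + mvec (idx3 N M) (nodal (A2m \<gamma>) (Phi t)) (mvec (idx3 N M) (kron3 idm Dx idm) (Phi t)) r
        + mvec (idx3 N M) (kron3 idm idm Dy) (mvec (idx3 N M) (nodal (B1m \<gamma>) (Phi t)) (Phi t)) r
        + mvec (idx3 N M) (nodal (B2m \<gamma>) (Phi t)) (mvec (idx3 N M) (kron3 idm idm Dy) (Phi t)) r
        = 0"
  shows "\<forall>t \<in> {a<..<b}.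
     ((\<lambda>s. qform (idx3 N M) (Phi s)
              (mmul (idx3 N M) (kron3 (diagm (Pdiag alpha2 \<gamma>)) idm idm) (kron3 idm Px Py)))
       has_real_derivative
       (- qform (idx3 N M) (Phi t)
            (madd
              (mmul (idx3 N M) (kron3 idm (bnd N) Py)
                 (smul 2 (mmul (idx3 N M) (kron3 (diagm (Pdiag alpha2 \<gamma>)) idm idm) (nodal (A1m \<gamma>) (Phi t)))))
              (mmul (idx3 N M) (kron3 idm Px (bnd M))
                 (smul 2 (mmul (idx3 N M) (kron3 (diagm (Pdiag alpha2 \<gamma>)) idm idm) (nodal (B1m \<gamma>) (Phi t)))))))
     ) (at t)"
  using diff scheme by (intro ballI split_form_energy_rate[OF sbpx sbpy split_compatible_A split_compatible_B])

end
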